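(* Let $n\ge1$, $m:\mathbb{Z}^{n+1}\to\mathbb{C}$, $1\le p\le\infty$ and $1/p+1/q=1$. Then $$|\mathcal{Y}_n(m)|_{\mathcal{L}^n\mathcal{F}L^p}\le\sup_{k_0}\Big[\sum_{\substack{k_0+k_1+\cdots+k_n=0\\k_0\text{ fixed}}}|m(k_0,\dots,k_n)|^q\Big]^{1/q},$$ and, for any $p\ge n/(n-1)$ (with $n\ge2$), $$|\mathcal{Y}_n(m)|_{\mathcal{L}^n\mathcal{F}L^p}\le\Big\{\sum_{k_0}\Big[\sum_{\substack{k_0+k_1+\cdots+k_n=0\\k_0\text{ fixed}}}|m|^{\hat q}\Big]^{p/\hat q}\Big\}^{1/p},\qquad \hat q=\frac{p}{p-n/(n-1)}.$$
   Context: $\mathcal{F}L^p$ denotes the space of distributions $\psi$ on $\mathbb{T}$ whose Fourier coefficients $\hat\psi(k)$ ($\psi=\sum_k\hat\psi(k)e^{ik\xi}$) form a sequence in $\ell^p(\mathbb{Z})$, normed by $\|\hat\psi\|_{\ell^p}$. For a multiplier $m$, the $n$-linear operator $\mathcal{Y}_n(m)$ is defined by $\widehat{\mathcal{Y}_n(m)(\psi_1,\dots,\psi_n)}(k_0)=\sum_{k_0+k_1+\cdots+k_n=0}m(k_0,k_1,\dots,k_n)\hat\psi_1(k_1)\cdots\hat\psi_n(k_n)$, and $|\cdot|_{\mathcal{L}^n\mathcal{F}L^p}$ is the $n$-linear operator norm on $\mathcal{F}L^p$. *)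

theory Defs
  imports "HOL-Analysis.Analysis"
begin

(* real power of an extended nonnegative real (used only with positive exponents) *)
definition epowr :: "ennreal \<Rightarrow> real \<Rightarrow> ennreal" where
  "epowr x a = (if x = top then (if a > 0 then top else if a = 0 then 1 else 0)
               else ennreal (enn2real x powr a))"

definition lpn :: "ennreal \<Rightarrow> 'a set \<Rightarrow> ('a \<Rightarrow> ennreal) \<Rightarrow> ennreal" where
  "lpn r A f = (if r = top then (SUP x\<in>A. f x)
               else epowr (\<Sum>\<^sub>\<infinity> x\<in>A. epowr (f x) (enn2real r)) (1 / enn2real r))"

(* indices (k_0,...,k_n) in Z^{n+1} (encoded as nat \<Rightarrow> int, zero beyond n)
   with k_0 fixed and k_0 + k_1 + ... + k_n = 0 *)
definition fiber :: "nat \<Rightarrow> int \<Rightarrow> (nat \<Rightarrow> int) set" where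
  "fiber n k0 = {k. k 0 = k0 \<and> (\<forall>i>n. k i = 0) \<and> (\<Sum>i\<le>n. k i) = 0}"

(* FL^p norm of psi, in terms of its Fourier coefficients psi_hat :: int \<Rightarrow> complex *)
definition FLnorm :: "ennreal \<Rightarrow> (int \<Rightarrow> complex) \<Rightarrow> ennreal" where
  "FLnorm p a = lpn p UNIV (\<lambda>k. ennreal (norm (a k)))"

(* Fourier coefficients of Y_n(m)(psi_1,...,psi_n); psi i are the Fourier coefficients of psi_i *)
definition Yop :: "nat \<Rightarrow> ((nat \<Rightarrow> int) \<Rightarrow> complex) \<Rightarrow> (nat \<Rightarrow> int \<Rightarrow> complex) \<Rightarrow> int \<Rightarrow> complex" where
  "Yop n m psi k0 = (\<Sum>\<^sub>\<infinity> k\<in>fiber n k0. m k * (\<Prod>i\<in>{1..n}. psi i (k i)))"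

definition Y_welldef :: "nat \<Rightarrow> ennreal \<Rightarrow> ((nat \<Rightarrow> int) \<Rightarrow> complex) \<Rightarrow> bool" where
  "Y_welldef n p m = (\<forall>psi. (\<forall>i\<in>{1..n}. FLnorm p (psi i) < top) \<longrightarrow>
      (\<forall>k0. ((\<lambda>k. norm (m k * (\<Prod>i\<in>{1..n}. psi i (k i)))) summable_on (fiber n k0))))"

definition Ynorm :: "nat \<Rightarrow> ennreal \<Rightarrow> ((nat \<Rightarrow> int) \<Rightarrow> complex) \<Rightarrow> ennreal" where
  "Ynorm n p m = (if Y_welldef n p m then
      (SUP psi\<in>{psi. \<forall>i\<in>{1..n}. FLnorm p (psi i) \<le> 1}. FLnorm p (Yop n m psi))
    else top)"

end

theory Submission
  imports Defs
begin

(*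
  The coefficient of Y_n(m)(psi_1, ..., psi_n) at k_0 is bounded by the sum of
  |m(k)| |psi_1(k_1)| ... |psi_n(k_n)| over the fibre k_0 + k_1 + ... + k_n = 0, and both bounds
  come from Holder's inequality on that fibre.

  For the first bound, Holder with exponents q and p leaves the l^p norm over the fibre of
  |psi_1(k_1)| ... |psi_n(k_n)|; taking the l^p norm in k_0 as well sweeps out all of Z^n and
  produces the product of the norms of the psi_i.

  For the second bound, write |psi_1(k_1)| ... |psi_n(k_n)| as the product over i of
  G_i = prod_{j ~= i} |psi_j(k_j)|^(1/(n-1)). On a fibre the coordinates k_j, j ~= i, are free
  and determine k_i, so the l^((n-1)p) norm of G_i over the fibre is
  prod_{j ~= i} |psi_j|_p^(1/(n-1)). Holder with the n + 1 exponents q_hat, (n-1)p, ..., (n-1)p,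
  whose reciprocals sum to one, bounds the coefficient at k_0 by the l^q_hat norm of m on the
  fibre times prod_j |psi_j|_p, uniformly in k_0.
*)

section \<open>Real powers of extended nonnegative reals\<close>

lemma epowr_ennreal [simp]: "0 \<le> r \<Longrightarrow> epowr (ennreal r) a = ennreal (r powr a)"
  by (simp add: epowr_def)

lemma epowr_top [simp]: "a > 0 \<Longrightarrow> epowr top a = top"
  by (simp add: epowr_def)

lemma epowr_zero [simp]: "a > 0 \<Longrightarrow> epowr 0 a = 0"
  by (simp add: epowr_def)

lemma epowr_one_eq_one [simp]: "epowr 1 a = 1"
  by (simp add: epowr_def)

lemma epowr_one [simp]: "epowr x 1 = x"
  by (cases x rule: ennreal_cases) (auto simp: epowr_def)

lemma epowr_eq_0_iff [simp]: "a > 0 \<Longrightarrow> epowr x a = 0 \<longleftrightarrow> x = 0"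
  by (cases x rule: ennreal_cases) (auto simp: epowr_def)

lemma epowr_eq_top_iff [simp]: "a > 0 \<Longrightarrow> epowr x a = top \<longleftrightarrow> x = top"
  by (cases x rule: ennreal_cases) (auto simp: epowr_def)

lemma epowr_mult:
  assumes "a > 0"
  shows "epowr (x * y) a = epowr x a * epowr y a"
proof (cases "x = 0 \<or> y = 0")
  case False
  with assms show ?thesis
    by (cases x rule: ennreal_cases; cases y rule: ennreal_cases)
       (auto simp: ennreal_mult_top ennreal_top_mult powr_mult ennreal_mult[symmetric]
             simp del: ennreal_eq_0_iff)
qed (use assms in auto)

lemma epowr_prod: "a > 0 \<Longrightarrow> epowr (\<Prod>i\<in>I. f i) a = (\<Prod>i\<in>I. epowr (f i) a)"
  by (induction I rule: infinite_finite_induct) (auto simp: epowr_mult)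

lemma epowr_epowr: "a > 0 \<Longrightarrow> b > 0 \<Longrightarrow> epowr (epowr x a) b = epowr x (a * b)"
  by (cases x rule: ennreal_cases) (auto simp: powr_powr)

lemma epowr_mono: "a > 0 \<Longrightarrow> x \<le> y \<Longrightarrow> epowr x a \<le> epowr y a"
  by (cases x rule: ennreal_cases; cases y rule: ennreal_cases)
     (auto intro!: ennreal_leI powr_mono2 simp: top_unique)

lemma epowr_inverse_power: "N > 0 \<Longrightarrow> epowr x (1 / real N) ^ N = x"
  by (cases x rule: ennreal_cases)
     (auto simp: ennreal_power root_powr_inverse[symmetric] power_eq_top_ennreal)

section \<open>Sums of extended nonnegative reals\<close>

lemma sum_le_infsum_ennreal:
  fixes f :: "'a \<Rightarrow> ennreal"
  assumes "finite F" "F \<subseteq> A"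
  shows "sum f F \<le> infsum f A"
  unfolding nonneg_infsum_complete[of A f, simplified] using assms by (intro SUP_upper) auto

lemma le_infsum_ennreal:
  fixes f :: "'a \<Rightarrow> ennreal"
  shows "x \<in> A \<Longrightarrow> f x \<le> infsum f A"
  using sum_le_infsum_ennreal[of "{x}" A f] by simp

lemma infsum_le_ennreal:
  fixes f :: "'a \<Rightarrow> ennreal"
  assumes "\<And>F. finite F \<Longrightarrow> F \<subseteq> A \<Longrightarrow> sum f F \<le> B"
  shows "infsum f A \<le> B"
  unfolding nonneg_infsum_complete[of A f, simplified] using assms by (intro SUP_least) auto

lemma infsum_mono_ennreal:
  fixes f g :: "'a \<Rightarrow> ennreal"
  shows "(\<And>x. x \<in> A \<Longrightarrow> f x \<le> g x) \<Longrightarrow> infsum f A \<le> infsum g A"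
  by (rule infsum_mono) (simp_all add: nonneg_summable_on_complete)

lemma infsum_cmult_right_ennreal:
  fixes f :: "'a \<Rightarrow> ennreal"
  shows "infsum (\<lambda>x. c * f x) A = c * infsum f A"
  unfolding nonneg_infsum_complete[of A f, simplified]
    nonneg_infsum_complete[of A "\<lambda>x. c * f x", simplified]
  by (simp add: SUP_mult_left_ennreal sum_distrib_left)

lemma infsum_cmult_left_ennreal:
  fixes f :: "'a \<Rightarrow> ennreal"
  shows "infsum (\<lambda>x. f x * c) A = infsum f A * c"
  using infsum_cmult_right_ennreal[of c f A] by (simp add: mult.commute)

lemma infsum_Sigma_ennreal:
  fixes f :: "'a \<times> 'b \<Rightarrow> ennreal"
  shows "infsum f (Sigma A B) = infsum (\<lambda>x. infsum (\<lambda>y. f (x, y)) (B x)) A"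
proof (rule antisym)
  show "infsum f (Sigma A B) \<le> infsum (\<lambda>x. infsum (\<lambda>y. f (x, y)) (B x)) A"
  proof (rule infsum_le_ennreal)
    fix F assume F: "finite F" "F \<subseteq> Sigma A B"
    define H where "H x = {y. (x, y) \<in> F}" for x
    have fin_H: "finite (H x)" for x
      using finite_imageI[OF F(1), of snd] by (rule finite_subset[rotated]) (force simp: H_def)
    have F_eq: "F = Sigma (fst ` F) H"
      by (auto simp: H_def image_iff) (metis fst_conv)
    have "sum f F = (\<Sum>x\<in>fst ` F. \<Sum>y\<in>H x. f (x, y))"
      using F(1) fin_H by (subst F_eq, subst sum.Sigma) auto
    also have "\<dots> \<le> (\<Sum>x\<in>fst ` F. infsum (\<lambda>y. f (x, y)) (B x))"
      using F(2) fin_H by (intro sum_mono sum_le_infsum_ennreal) (auto simp: H_def)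
    also have "\<dots> \<le> infsum (\<lambda>x. infsum (\<lambda>y. f (x, y)) (B x)) A"
      using F by (intro sum_le_infsum_ennreal) auto
    finally show "sum f F \<le> \<dots>" .
  qed
next
  have finite_case: "(\<Sum>x\<in>G. infsum (\<lambda>y. f (x, y)) (B x)) = infsum f (Sigma G B)"
    if "finite G" for G
    using that
  proof (induction G rule: finite_induct)
    case (insert x G)
    have "Sigma (insert x G) B = Pair x ` B x \<union> Sigma G B" by auto
    then have "infsum f (Sigma (insert x G) B) = infsum f (Pair x ` B x) + infsum f (Sigma G B)"
      using insert by (auto intro!: infsum_Un_disjoint nonneg_summable_on_complete)
    also have "infsum f (Pair x ` B x) = infsum (\<lambda>y. f (x, y)) (B x)"
      by (subst infsum_reindex) (auto simp: inj_on_def o_def)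
    finally show ?case using insert by simp
  qed simp
  show "infsum (\<lambda>x. infsum (\<lambda>y. f (x, y)) (B x)) A \<le> infsum f (Sigma A B)"
    by (rule infsum_le_ennreal)
       (auto simp: finite_case intro!: infsum_mono_neutral nonneg_summable_on_complete)
qed

lemma infsum_prod_PiE_ennreal:
  fixes f :: "'a \<Rightarrow> 'b \<Rightarrow> ennreal"
  assumes "finite J"
  shows "infsum (\<lambda>g. \<Prod>j\<in>J. f j (g j)) (PiE J (\<lambda>_. UNIV)) = (\<Prod>j\<in>J. infsum (f j) UNIV)"
  using assms
proof (induction J rule: finite_induct)
  case (insert x F)
  let ?extend = "\<lambda>(g, y). g(x := y)"
  have PiE_eq: "PiE (insert x F) (\<lambda>_. UNIV) = ?extend ` (PiE F (\<lambda>_. UNIV) \<times> UNIV)"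
    unfolding PiE_insert_eq by (subst swap_product [symmetric]) (simp add: image_image case_prod_unfold)
  have "infsum (\<lambda>g. \<Prod>j\<in>insert x F. f j (g j)) (PiE (insert x F) (\<lambda>_. UNIV))
      = infsum ((\<lambda>g. \<Prod>j\<in>insert x F. f j (g j)) \<circ> ?extend) (PiE F (\<lambda>_. UNIV) \<times> UNIV)"
    unfolding PiE_eq using inj_combinator'[OF insert.hyps(2)] by (rule infsum_reindex)
  also have "\<dots> = infsum (\<lambda>(g, y). f x y * (\<Prod>j\<in>F. f j (g j))) (PiE F (\<lambda>_. UNIV) \<times> UNIV)"
    using insert.hyps by (intro infsum_cong) (auto intro!: arg_cong2[where f = times] prod.cong)
  also have "\<dots> = infsum (\<lambda>g. infsum (f x) UNIV * (\<Prod>j\<in>F. f j (g j))) (PiE F (\<lambda>_. UNIV))"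
    by (simp add: infsum_Sigma_ennreal infsum_cmult_left_ennreal)
  also have "\<dots> = (\<Prod>j\<in>insert x F. infsum (f j) UNIV)"
    using insert by (simp add: infsum_cmult_right_ennreal)
  finally show ?case .
qed simp

lemma ennreal_infsum_real:
  fixes f :: "'a \<Rightarrow> real"
  assumes nonneg: "\<And>x. x \<in> A \<Longrightarrow> f x \<ge> 0" and finite: "infsum (\<lambda>x. ennreal (f x)) A < top"
  shows "f summable_on A" "ennreal (infsum f A) = infsum (\<lambda>x. ennreal (f x)) A"
proof -
  have "sum f F \<le> enn2real (infsum (\<lambda>x. ennreal (f x)) A)" if "finite F" "F \<subseteq> A" for F
  proof -
    have "ennreal (sum f F) = (\<Sum>x\<in>F. ennreal (f x))"
      using that nonneg by (intro sum_ennreal[symmetric]) auto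
    also have "\<dots> \<le> infsum (\<lambda>x. ennreal (f x)) A"
      using that by (rule sum_le_infsum_ennreal)
    finally have "enn2real (ennreal (sum f F)) \<le> enn2real (infsum (\<lambda>x. ennreal (f x)) A)"
      using finite by (intro enn2real_mono) auto
    then show ?thesis
      using that nonneg by (simp add: sum_nonneg subset_iff)
  qed
  then show summable: "f summable_on A"
    using nonneg by (intro nonneg_bdd_above_summable_on bdd_aboveI) auto
  have "ennreal (infsum f A) = (SUP F\<in>{F. finite F \<and> F \<subseteq> A}. ennreal (sum f F))"
    using summable nonneg by (rule infsum_nonneg_is_SUPREMUM_ennreal)
  also have "\<dots> = (SUP F\<in>{F. finite F \<and> F \<subseteq> A}. (\<Sum>x\<in>F. ennreal (f x)))"
    using nonneg by (intro SUP_cong refl sum_ennreal[symmetric]) auto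
  also have "\<dots> = infsum (\<lambda>x. ennreal (f x)) A"
    by (simp add: nonneg_infsum_complete)
  finally show "ennreal (infsum f A) = infsum (\<lambda>x. ennreal (f x)) A" .
qed

lemma prod_mono_ennreal:
  fixes f g :: "'a \<Rightarrow> ennreal"
  shows "(\<And>i. i \<in> A \<Longrightarrow> f i \<le> g i) \<Longrightarrow> prod f A \<le> prod g A"
  by (induction A rule: infinite_finite_induct) (auto intro!: mult_mono)

section \<open>Holder's inequality\<close>

lemma weighted_geo_arith_mean:
  fixes w y :: "'i \<Rightarrow> real"
  assumes I: "finite I" "I \<noteq> {}" and w: "\<And>i. i \<in> I \<Longrightarrow> w i > 0" "sum w I = 1"
    and y: "\<And>i. i \<in> I \<Longrightarrow> y i \<ge> 0"
  shows "(\<Prod>i\<in>I. y i powr w i) \<le> (\<Sum>i\<in>I. w i * y i)"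
proof (cases "\<exists>i\<in>I. y i = 0")
  case True
  then have "(\<Prod>i\<in>I. y i powr w i) = 0" using I by (auto simp: prod_zero_iff)
  then show ?thesis using w y by (simp add: sum_nonneg less_imp_le)
next
  case False
  then have y_pos: "\<And>i. i \<in> I \<Longrightarrow> y i > 0" using y by force
  have "convex_on {0<..} (\<lambda>x. - ln x)"
    using ln_concave by (simp add: concave_on_def)
  then have "- ln (\<Sum>i\<in>I. w i *\<^sub>R y i) \<le> (\<Sum>i\<in>I. w i * - ln (y i))"
    using I w y_pos by (intro convex_on_sum[where f = "\<lambda>x. - ln x"]) (auto intro: less_imp_le)
  then have ln_le: "(\<Sum>i\<in>I. w i * ln (y i)) \<le> ln (\<Sum>i\<in>I. w i * y i)"
    by (simp add: sum_negf)
  have "y i powr w i = exp (w i * ln (y i))" if "i \<in> I" for i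
    using y_pos[OF that] by (simp add: powr_def mult.commute)
  then have "(\<Prod>i\<in>I. y i powr w i) = exp (\<Sum>i\<in>I. w i * ln (y i))"
    using I by (simp add: exp_sum)
  also have "\<dots> \<le> exp (ln (\<Sum>i\<in>I. w i * y i))" using ln_le by simp
  also have "\<dots> = (\<Sum>i\<in>I. w i * y i)"
    using I w y_pos by (simp add: sum_pos)
  finally show ?thesis .
qed

lemma holder_sum_normalized_real:
  fixes w :: "'i \<Rightarrow> real" and a :: "'i \<Rightarrow> 'x \<Rightarrow> real"
  assumes I: "finite I" "I \<noteq> {}" and w: "\<And>i. i \<in> I \<Longrightarrow> w i > 0" "sum w I = 1"
    and a: "\<And>i x. i \<in> I \<Longrightarrow> x \<in> F \<Longrightarrow> a i x \<ge> 0" and F: "finite F"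
    and normalized: "\<And>i. i \<in> I \<Longrightarrow> (\<Sum>x\<in>F. a i x powr (1 / w i)) = 1"
  shows "(\<Sum>x\<in>F. \<Prod>i\<in>I. a i x) \<le> 1"
proof -
  have pointwise: "(\<Prod>i\<in>I. a i x) \<le> (\<Sum>i\<in>I. w i * a i x powr (1 / w i))" if "x \<in> F" for x
  proof -
    have "a i x = (a i x powr (1 / w i)) powr w i" if "i \<in> I" for i
      using w(1)[OF that] a[OF that \<open>x \<in> F\<close>] by (simp add: powr_powr)
    then have "(\<Prod>i\<in>I. a i x) = (\<Prod>i\<in>I. (a i x powr (1 / w i)) powr w i)"
      by (rule prod.cong[OF refl])
    also have "\<dots> \<le> (\<Sum>i\<in>I. w i * a i x powr (1 / w i))"
      using I w by (intro weighted_geo_arith_mean) auto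
    finally show ?thesis .
  qed
  have "(\<Sum>x\<in>F. \<Prod>i\<in>I. a i x) \<le> (\<Sum>x\<in>F. \<Sum>i\<in>I. w i * a i x powr (1 / w i))"
    using pointwise by (rule sum_mono)
  also have "\<dots> = (\<Sum>i\<in>I. w i * (\<Sum>x\<in>F. a i x powr (1 / w i)))"
    by (simp add: sum.swap[of _ F] sum_distrib_left)
  also have "\<dots> = 1"
    using normalized w by simp
  finally show ?thesis .
qed

lemma holder_sum_real:
  fixes w :: "'i \<Rightarrow> real" and a :: "'i \<Rightarrow> 'x \<Rightarrow> real"
  assumes I: "finite I" "I \<noteq> {}" and w: "\<And>i. i \<in> I \<Longrightarrow> w i > 0" "sum w I = 1"
    and a: "\<And>i x. i \<in> I \<Longrightarrow> x \<in> F \<Longrightarrow> a i x \<ge> 0" and F: "finite F"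
  shows "(\<Sum>x\<in>F. \<Prod>i\<in>I. a i x) \<le> (\<Prod>i\<in>I. (\<Sum>x\<in>F. a i x powr (1 / w i)) powr w i)"
proof -
  define T where "T i = (\<Sum>x\<in>F. a i x powr (1 / w i))" for i
  show ?thesis
  proof (cases "\<exists>j\<in>I. T j = 0")
    case True
    then obtain j where j: "j \<in> I" "T j = 0" by blast
    then have "a j x = 0" if "x \<in> F" for x
      using F that by (auto simp: T_def sum_nonneg_eq_0_iff)
    then have "(\<Sum>x\<in>F. \<Prod>i\<in>I. a i x) = 0"
      using j I by (auto intro!: sum.neutral prod_zero)
    then show ?thesis by (simp add: prod_nonneg)
  next
    case False
    then have T_pos: "\<And>i. i \<in> I \<Longrightarrow> T i > 0"
      by (metis T_def less_eq_real_def powr_ge_zero sum_nonneg)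
    define b where "b i x = a i x / T i powr w i" for i x
    have "(\<Sum>x\<in>F. b i x powr (1 / w i)) = 1" if "i \<in> I" for i
      using that a w(1)[OF that] T_pos[OF that]
      by (simp add: b_def powr_divide powr_powr sum_divide_distrib[symmetric] T_def)
    then have "(\<Sum>x\<in>F. \<Prod>i\<in>I. b i x) \<le> 1"
      using I w a T_pos F by (intro holder_sum_normalized_real) (auto simp: b_def)
    moreover have "(\<Prod>i\<in>I. a i x) = (\<Prod>i\<in>I. T i powr w i) * (\<Prod>i\<in>I. b i x)" for x
    proof -
      have "a i x = T i powr w i * b i x" if "i \<in> I" for i
        using T_pos[OF that] by (simp add: b_def)
      then show ?thesis
        by (simp add: prod.distrib[symmetric] cong: prod.cong)
    qed
    ultimately show ?thesis
      by (simp add: sum_distrib_left[symmetric] T_def mult_left_le prod_nonneg)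
  qed
qed

lemma holder_sum_ennreal:
  fixes w :: "'i \<Rightarrow> real" and g :: "'i \<Rightarrow> 'x \<Rightarrow> ennreal"
  assumes I: "finite I" "I \<noteq> {}" and w: "\<And>i. i \<in> I \<Longrightarrow> w i > 0" "sum w I = 1"
    and F: "finite F"
  shows "(\<Sum>x\<in>F. \<Prod>i\<in>I. g i x) \<le> (\<Prod>i\<in>I. epowr (\<Sum>x\<in>F. epowr (g i x) (1 / w i)) (w i))"
proof (cases "\<exists>i\<in>I. \<exists>x\<in>F. g i x = top")
  case True
  then obtain j y where jy: "j \<in> I" "y \<in> F" "g j y = top" by blast
  show ?thesis
  proof (cases "\<exists>i\<in>I. \<forall>x\<in>F. g i x = 0")
    case True
    then have "(\<Sum>x\<in>F. \<Prod>i\<in>I. g i x) = 0"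
      using I by (auto intro!: sum.neutral prod_zero)
    then show ?thesis by simp
  next
    case False
    then have "epowr (\<Sum>x\<in>F. epowr (g i x) (1 / w i)) (w i) \<noteq> 0" if "i \<in> I" for i
      using that w(1)[OF that] F by (auto simp: sum_eq_0_iff)
    moreover have "epowr (\<Sum>x\<in>F. epowr (g j x) (1 / w j)) (w j) = top"
      using jy w(1)[OF jy(1)] F by (auto simp: ennreal_sum_eq_top)
    ultimately have "(\<Prod>i\<in>I. epowr (\<Sum>x\<in>F. epowr (g i x) (1 / w i)) (w i)) = top"
      using I jy(1) by (subst ennreal_prod_eq_top) blast
    then show ?thesis by simp
  qed
next
  case False
  define a where "a i x = enn2real (g i x)" for i x
  have g_eq: "g i x = ennreal (a i x)" if "i \<in> I" "x \<in> F" for i x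
    using False that by (auto simp: a_def ennreal_enn2real_if)
  have a_nonneg: "a i x \<ge> 0" for i x
    by (simp add: a_def)
  have "(\<Sum>x\<in>F. \<Prod>i\<in>I. g i x) = (\<Sum>x\<in>F. \<Prod>i\<in>I. ennreal (a i x))"
    by (auto intro!: sum.cong prod.cong simp: g_eq)
  also have "\<dots> = ennreal (\<Sum>x\<in>F. \<Prod>i\<in>I. a i x)"
    by (simp add: a_nonneg prod_ennreal sum_ennreal prod_nonneg)
  also have "\<dots> \<le> ennreal (\<Prod>i\<in>I. (\<Sum>x\<in>F. a i x powr (1 / w i)) powr w i)"
    using holder_sum_real[OF I w _ F, of a] by (intro ennreal_leI) (simp add: a_nonneg)
  also have "\<dots> = (\<Prod>i\<in>I. epowr (\<Sum>x\<in>F. epowr (ennreal (a i x)) (1 / w i)) (w i))"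
    by (simp add: a_nonneg sum_ennreal prod_ennreal sum_nonneg)
  also have "\<dots> = (\<Prod>i\<in>I. epowr (\<Sum>x\<in>F. epowr (g i x) (1 / w i)) (w i))"
    by (auto intro!: sum.cong prod.cong simp: g_eq)
  finally show ?thesis .
qed

lemma holder_infsum_ennreal:
  fixes w :: "'i \<Rightarrow> real" and g :: "'i \<Rightarrow> 'x \<Rightarrow> ennreal"
  assumes I: "finite I" "I \<noteq> {}" and w: "\<And>i. i \<in> I \<Longrightarrow> w i > 0" "sum w I = 1"
  shows "infsum (\<lambda>x. \<Prod>i\<in>I. g i x) A
           \<le> (\<Prod>i\<in>I. epowr (infsum (\<lambda>x. epowr (g i x) (1 / w i)) A) (w i))"
proof (rule infsum_le_ennreal)
  fix F assume F: "finite F" "F \<subseteq> A"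
  have "(\<Sum>x\<in>F. \<Prod>i\<in>I. g i x) \<le> (\<Prod>i\<in>I. epowr (\<Sum>x\<in>F. epowr (g i x) (1 / w i)) (w i))"
    using I w F(1) by (rule holder_sum_ennreal)
  also have "\<dots> \<le> (\<Prod>i\<in>I. epowr (infsum (\<lambda>x. epowr (g i x) (1 / w i)) A) (w i))"
    using F w by (intro prod_mono_ennreal epowr_mono sum_le_infsum_ennreal) auto
  finally show "(\<Sum>x\<in>F. \<Prod>i\<in>I. g i x) \<le> \<dots>" .
qed

lemma nonzero_ennreal_cases:
  fixes p :: ennreal
  assumes "p \<noteq> 0"
  obtains "p = top" | r where "0 < r" "p = ennreal r"
  using assms by (cases p rule: ennreal_cases) auto

lemma lpn_top: "lpn top A f = (SUP x\<in>A. f x)"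
  by (simp add: lpn_def)

lemma lpn_ennreal: "0 < r \<Longrightarrow> lpn (ennreal r) A f = epowr (\<Sum>\<^sub>\<infinity>x\<in>A. epowr (f x) r) (1 / r)"
  by (simp add: lpn_def)

lemma lpn_mono:
  assumes "p \<noteq> 0" and "\<And>x. x \<in> A \<Longrightarrow> f x \<le> g x"
  shows "lpn p A f \<le> lpn p A g"
  using assms(1)
proof (cases rule: nonzero_ennreal_cases)
  case 1
  then show ?thesis using assms(2) by (simp add: lpn_top SUP_subset_mono)
next
  case (2 r)
  then show ?thesis
    using assms(2) by (simp add: lpn_ennreal epowr_mono infsum_mono_ennreal)
qed

lemma lpn_upper:
  assumes "p \<noteq> 0" and "x \<in> A"
  shows "f x \<le> lpn p A f"
  using assms(1)
proof (cases rule: nonzero_ennreal_cases)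
  case 1
  then show ?thesis using assms(2) by (simp add: lpn_top SUP_upper)
next
  case (2 r)
  then have "f x = epowr (epowr (f x) r) (1 / r)"
    by (simp add: epowr_epowr)
  also have "\<dots> \<le> lpn p A f"
    using 2 assms(2) by (simp add: lpn_ennreal, intro epowr_mono le_infsum_ennreal) auto
  finally show ?thesis .
qed

lemma lpn_cmult:
  assumes "p \<noteq> 0"
  shows "lpn p A (\<lambda>x. c * f x) = c * lpn p A f"
  using assms
proof (cases rule: nonzero_ennreal_cases)
  case 1
  then show ?thesis by (simp add: lpn_top SUP_mult_left_ennreal)
next
  case (2 r)
  then show ?thesis
    by (simp add: lpn_ennreal epowr_mult infsum_cmult_right_ennreal epowr_epowr)
qed

lemma holder_lpn:
  fixes g :: "'i \<Rightarrow> 'x \<Rightarrow> ennreal" and r :: "'i \<Rightarrow> ennreal"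
  assumes exponents: "(\<Sum>i\<in>I. inverse (r i)) = 1"
  shows "(\<Sum>\<^sub>\<infinity>x\<in>A. \<Prod>i\<in>I. g i x) \<le> (\<Prod>i\<in>I. lpn (r i) A (g i))"
proof -
  \<comment> \<open>Factors with exponent \<open>top\<close> are bounded by their suprema and pulled out of the sum;
    the remaining ones are handled by Holder with the weights \<open>1 / r i\<close>.\<close>
  have I: "finite I"
    using exponents by (metis sum.infinite zero_neq_one)
  define J where "J = {i\<in>I. r i = top}"
  define K where "K = I - J"
  define \<rho> where "\<rho> i = enn2real (r i)" for i
  have r_K: "r i = ennreal (\<rho> i)" "\<rho> i > 0" if "i \<in> K" for i
  proof -
    have "inverse (r i) \<le> 1"
      using member_le_sum[of i I "\<lambda>i. inverse (r i)"] that I exponents by (auto simp: K_def)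
    then have "r i \<noteq> 0" by (auto simp: top_unique)
    then show "r i = ennreal (\<rho> i)" "\<rho> i > 0"
      using that
      by (auto simp: K_def J_def \<rho>_def enn2real_positive_iff less_top ennreal_enn2real_if
                     zero_less_iff_neq_zero)
  qed
  have "inverse (r i) = ennreal (1 / \<rho> i)" if "i \<in> K" for i
    using r_K[OF that] by (simp add: inverse_ennreal inverse_eq_divide)
  then have "(\<Sum>i\<in>I. inverse (r i)) = (\<Sum>i\<in>K. ennreal (1 / \<rho> i))"
    using I by (intro sum.mono_neutral_cong_right) (auto simp: K_def J_def)
  then have weights: "(\<Sum>i\<in>K. 1 / \<rho> i) = 1"
    using exponents r_K(2) by (simp add: sum_ennreal ennreal_eq_1 less_imp_le)
  then have "K \<noteq> {}" by auto
  have I_split: "I = J \<union> K" "J \<inter> K = {}"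
    by (auto simp: K_def J_def)
  have "(\<Sum>\<^sub>\<infinity>x\<in>A. \<Prod>i\<in>I. g i x) = (\<Sum>\<^sub>\<infinity>x\<in>A. (\<Prod>i\<in>J. g i x) * (\<Prod>i\<in>K. g i x))"
    using I by (simp add: I_split prod.union_disjoint)
  also have "\<dots> \<le> (\<Sum>\<^sub>\<infinity>x\<in>A. (\<Prod>i\<in>J. lpn (r i) A (g i)) * (\<Prod>i\<in>K. g i x))"
    by (intro infsum_mono_ennreal mult_right_mono prod_mono_ennreal)
       (auto simp: J_def lpn_top intro: SUP_upper)
  also have "\<dots> = (\<Prod>i\<in>J. lpn (r i) A (g i)) * (\<Sum>\<^sub>\<infinity>x\<in>A. \<Prod>i\<in>K. g i x)"
    by (rule infsum_cmult_right_ennreal)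
  also have "(\<Sum>\<^sub>\<infinity>x\<in>A. \<Prod>i\<in>K. g i x)
      \<le> (\<Prod>i\<in>K. epowr (\<Sum>\<^sub>\<infinity>x\<in>A. epowr (g i x) (1 / (1 / \<rho> i))) (1 / \<rho> i))"
    using I \<open>K \<noteq> {}\<close> r_K(2) weights by (intro holder_infsum_ennreal) (auto simp: K_def)
  also have "\<dots> = (\<Prod>i\<in>K. lpn (r i) A (g i))"
    using r_K by (intro prod.cong) (simp_all add: lpn_ennreal)
  finally show ?thesis
    using I by (simp add: I_split prod.union_disjoint mult_left_mono)
qed

lemma holder_lpn2:
  assumes "inverse p + inverse q = 1"
  shows "(\<Sum>\<^sub>\<infinity>x\<in>A. f x * g x) \<le> lpn p A f * lpn q A g"
  using holder_lpn[where I = "{0::nat, 1}" and r = "\<lambda>i. if i = 0 then p else q"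
      and g = "\<lambda>i. if i = 0 then f else g" and A = A]
    assms by simp

section \<open>Fibres\<close>

lemma mem_fiber_iff:
  "k \<in> fiber n k0 \<longleftrightarrow> k 0 = k0 \<and> (\<forall>i>n. k i = 0) \<and> (\<Sum>i\<in>{1..n}. k i) = - k0"
  by (auto simp: fiber_def atMost_atLeast0 sum.atLeast_Suc_atMost)

lemma bij_betw_Sigma_fiber_PiE:
  "bij_betw (\<lambda>(k0, k). restrict k {1..n}) (SIGMA k0:UNIV. fiber n k0) (PiE {1..n} (\<lambda>_. UNIV))"
proof -
  define extend where "extend g = (\<lambda>t. if t = 0 then - (\<Sum>i\<in>{1..n}. g i) else if t \<le> n then g t else 0)"
    for g :: "nat \<Rightarrow> int"
  have sum_extend: "(\<Sum>i\<in>{1..n}. extend g i) = (\<Sum>i\<in>{1..n}. g i)" for g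
    by (intro sum.cong) (auto simp: extend_def)
  show ?thesis
  proof (rule bij_betwI[where g = "\<lambda>g. (- (\<Sum>i\<in>{1..n}. g i), extend g)"])
    show "(\<lambda>g. (- (\<Sum>i\<in>{1..n}. g i), extend g)) \<in> PiE {1..n} (\<lambda>_. UNIV) \<rightarrow> (SIGMA k0:UNIV. fiber n k0)"
      by (auto simp: mem_fiber_iff sum_extend) (auto simp: extend_def)
    show "(\<lambda>(k0, k). restrict k {1..n}) ((\<lambda>g. (- (\<Sum>i\<in>{1..n}. g i), extend g)) g) = g"
      if "g \<in> PiE {1..n} (\<lambda>_. UNIV)" for g
      using that by (auto simp: extend_def fun_eq_iff PiE_def extensional_def)
    show "(\<lambda>g. (- (\<Sum>i\<in>{1..n}. g i), extend g)) ((\<lambda>(k0, k). restrict k {1..n}) x) = x"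
      if "x \<in> (SIGMA k0:UNIV. fiber n k0)" for x
      using that by (cases x) (auto simp: mem_fiber_iff extend_def fun_eq_iff not_le)
  qed auto
qed

lemma bij_betw_fiber_PiE_omit:
  assumes i: "i \<in> {1..n}"
  shows "bij_betw (\<lambda>k. restrict k ({1..n} - {i})) (fiber n k0) (PiE ({1..n} - {i}) (\<lambda>_. UNIV))"
proof -
  define J where "J = {1..n} - {i}"
  have sum_split: "(\<Sum>j\<in>{1..n}. g j) = g i + (\<Sum>j\<in>J. g j)" for g :: "nat \<Rightarrow> int"
    using i by (simp add: J_def sum.remove)
  define extend where "extend g = (\<lambda>t. if t = 0 then k0 else if t = i then - k0 - (\<Sum>j\<in>J. g j)
                                      else if t \<in> J then g t else 0)" for g :: "nat \<Rightarrow> int"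
  have "bij_betw (\<lambda>k. restrict k J) (fiber n k0) (PiE J (\<lambda>_. UNIV))"
  proof (rule bij_betwI[where g = extend])
    show "extend \<in> PiE J (\<lambda>_. UNIV) \<rightarrow> fiber n k0"
    proof
      fix g
      have "i \<notin> J" "0 \<notin> J" "J \<subseteq> {..n}" by (auto simp: J_def)
      then have "(\<Sum>j\<in>J. extend g j) = (\<Sum>j\<in>J. g j)"
        by (intro sum.cong) (auto simp: extend_def)
      then have "(\<Sum>j\<in>{1..n}. extend g j) = - k0"
        using sum_split[of "extend g"] i by (simp add: extend_def)
      then show "extend g \<in> fiber n k0"
        using i \<open>J \<subseteq> {..n}\<close> by (auto simp: mem_fiber_iff extend_def)
    qed
    show "restrict (extend g) J = g" if "g \<in> PiE J (\<lambda>_. UNIV)" for g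
      using that i by (auto simp: extend_def fun_eq_iff PiE_def extensional_def J_def)
    show "extend (restrict k J) = k" if "k \<in> fiber n k0" for k
      using that i sum_split[of k] by (auto simp: mem_fiber_iff extend_def fun_eq_iff J_def)
  qed auto
  then show ?thesis by (simp add: J_def)
qed

lemma infsum_infsum_fiber_prod:
  fixes f :: "nat \<Rightarrow> int \<Rightarrow> ennreal"
  shows "(\<Sum>\<^sub>\<infinity>k0. \<Sum>\<^sub>\<infinity>k\<in>fiber n k0. \<Prod>i\<in>{1..n}. f i (k i)) = (\<Prod>i\<in>{1..n}. infsum (f i) UNIV)"
proof -
  have "(\<Sum>\<^sub>\<infinity>k0. \<Sum>\<^sub>\<infinity>k\<in>fiber n k0. \<Prod>i\<in>{1..n}. f i (k i))
      = (\<Sum>\<^sub>\<infinity>(k0, k)\<in>(SIGMA k0:UNIV. fiber n k0). \<Prod>i\<in>{1..n}. f i (restrict k {1..n} i))"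
    by (simp add: infsum_Sigma_ennreal)
  also have "\<dots> = (\<Sum>\<^sub>\<infinity>g\<in>PiE {1..n} (\<lambda>_. UNIV). \<Prod>i\<in>{1..n}. f i (g i))"
    using infsum_reindex_bij_betw[OF bij_betw_Sigma_fiber_PiE[of n], of "\<lambda>g. \<Prod>i\<in>{1..n}. f i (g i)"]
    by (simp add: case_prod_unfold)
  also have "\<dots> = (\<Prod>i\<in>{1..n}. infsum (f i) UNIV)"
    by (simp add: infsum_prod_PiE_ennreal)
  finally show ?thesis .
qed

lemma lpn_lpn_fiber_prod_le:
  fixes f :: "nat \<Rightarrow> int \<Rightarrow> ennreal"
  assumes "p \<noteq> 0"
  shows "lpn p UNIV (\<lambda>k0. lpn p (fiber n k0) (\<lambda>k. \<Prod>i\<in>{1..n}. f i (k i)))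
           \<le> (\<Prod>i\<in>{1..n}. lpn p UNIV (f i))"
  using assms
proof (cases rule: nonzero_ennreal_cases)
  case 1
  then show ?thesis
    by (auto simp: lpn_top intro!: SUP_least prod_mono_ennreal SUP_upper)
next
  case (2 r)
  then have "lpn p UNIV (\<lambda>k0. lpn p (fiber n k0) (\<lambda>k. \<Prod>i\<in>{1..n}. f i (k i)))
      = epowr (\<Sum>\<^sub>\<infinity>k0. \<Sum>\<^sub>\<infinity>k\<in>fiber n k0. \<Prod>i\<in>{1..n}. epowr (f i (k i)) r) (1 / r)"
    by (simp add: lpn_ennreal epowr_epowr epowr_prod)
  also have "\<dots> = (\<Prod>i\<in>{1..n}. lpn p UNIV (f i))"
    using 2 infsum_infsum_fiber_prod[of "\<lambda>i x. epowr (f i x) r" n]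
    by (simp add: lpn_ennreal epowr_prod)
  finally show ?thesis by simp
qed

lemma infsum_fiber_prod_omit:
  fixes h :: "nat \<Rightarrow> int \<Rightarrow> ennreal"
  assumes "i \<in> {1..n}"
  shows "(\<Sum>\<^sub>\<infinity>k\<in>fiber n k0. \<Prod>j\<in>{1..n} - {i}. h j (k j)) = (\<Prod>j\<in>{1..n} - {i}. infsum (h j) UNIV)"
proof -
  have "(\<Sum>\<^sub>\<infinity>k\<in>fiber n k0. \<Prod>j\<in>{1..n} - {i}. h j (k j))
      = (\<Sum>\<^sub>\<infinity>k\<in>fiber n k0. \<Prod>j\<in>{1..n} - {i}. h j (restrict k ({1..n} - {i}) j))"
    by simp
  also have "\<dots> = (\<Sum>\<^sub>\<infinity>g\<in>PiE ({1..n} - {i}) (\<lambda>_. UNIV). \<Prod>j\<in>{1..n} - {i}. h j (g j))"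
    by (rule infsum_reindex_bij_betw[OF bij_betw_fiber_PiE_omit[OF assms]])
  also have "\<dots> = (\<Prod>j\<in>{1..n} - {i}. infsum (h j) UNIV)"
    by (simp add: infsum_prod_PiE_ennreal)
  finally show ?thesis .
qed

lemma lpn_fiber_prod_omit:
  fixes f :: "nat \<Rightarrow> int \<Rightarrow> ennreal"
  assumes "i \<in> {1..n}" "0 < r" "0 < s"
  shows "lpn (ennreal (s * r)) (fiber n k0) (\<lambda>k. \<Prod>j\<in>{1..n} - {i}. epowr (f j (k j)) (1 / s))
           = (\<Prod>j\<in>{1..n} - {i}. epowr (lpn (ennreal r) UNIV (f j)) (1 / s))"
proof -
  have "lpn (ennreal (s * r)) (fiber n k0) (\<lambda>k. \<Prod>j\<in>{1..n} - {i}. epowr (f j (k j)) (1 / s))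
      = epowr (\<Sum>\<^sub>\<infinity>k\<in>fiber n k0. \<Prod>j\<in>{1..n} - {i}. epowr (f j (k j)) r) (1 / (s * r))"
    using assms(2,3) by (simp add: lpn_ennreal epowr_prod epowr_epowr)
  also have "\<dots> = epowr (\<Prod>j\<in>{1..n} - {i}. \<Sum>\<^sub>\<infinity>x. epowr (f j x) r) (1 / (s * r))"
    using infsum_fiber_prod_omit[OF assms(1), of "\<lambda>j x. epowr (f j x) r"] by simp
  also have "\<dots> = (\<Prod>j\<in>{1..n} - {i}. epowr (lpn (ennreal r) UNIV (f j)) (1 / s))"
    using assms(2,3) by (simp add: lpn_ennreal epowr_prod epowr_epowr mult.commute[of s r])
  finally show ?thesis .
qed

lemma prod_prod_Diff_singleton:
  fixes h :: "'a \<Rightarrow> 'b::comm_monoid_mult"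
  assumes "finite I"
  shows "(\<Prod>i\<in>I. \<Prod>j\<in>I - {i}. h j) = (\<Prod>j\<in>I. h j ^ (card I - 1))"
proof -
  have "(\<Prod>i\<in>I. \<Prod>j\<in>I - {i}. h j) = (\<Prod>i\<in>I. \<Prod>j\<in>{j\<in>I. i \<noteq> j}. h j)"
    by (intro prod.cong) auto
  also have "\<dots> = (\<Prod>j\<in>I. \<Prod>i\<in>{i\<in>I. i \<noteq> j}. h j)"
    by (rule prod.swap_restrict[OF assms assms])
  also have "\<dots> = (\<Prod>j\<in>I. h j ^ (card I - 1))"
  proof (intro prod.cong refl)
    fix j assume "j \<in> I"
    then have "{i\<in>I. i \<noteq> j} = I - {j}" by auto
    then show "(\<Prod>i\<in>{i\<in>I. i \<noteq> j}. h j) = h j ^ (card I - 1)"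
      using assms \<open>j \<in> I\<close> by (simp add: card_Diff_singleton)
  qed
  finally show ?thesis .
qed

lemma prod_prod_Diff_singleton_epowr:
  assumes "finite I" "card I \<ge> 2"
  shows "(\<Prod>i\<in>I. \<Prod>j\<in>I - {i}. epowr (h j) (1 / (real (card I) - 1))) = (\<Prod>j\<in>I. h j)"
proof -
  define N where "N = card I - 1"
  have "card I = Suc N" "N > 0"
    using assms(2) by (simp_all add: N_def)
  then show ?thesis
    using assms(1) by (simp add: prod_prod_Diff_singleton epowr_inverse_power)
qed

section \<open>Bounds for the multilinear operator\<close>

definition Yop_majorant ::
    "nat \<Rightarrow> ((nat \<Rightarrow> int) \<Rightarrow> complex) \<Rightarrow> (nat \<Rightarrow> int \<Rightarrow> complex) \<Rightarrow> int \<Rightarrow> ennreal" where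
  "Yop_majorant n m psi k0 =
     (\<Sum>\<^sub>\<infinity>k\<in>fiber n k0. ennreal (norm (m k)) * (\<Prod>i\<in>{1..n}. ennreal (norm (psi i (k i)))))"

lemma Yop_majorant_eq_infsum_norm:
  "Yop_majorant n m psi k0 = (\<Sum>\<^sub>\<infinity>k\<in>fiber n k0. ennreal (norm (m k * (\<Prod>i\<in>{1..n}. psi i (k i)))))"
  by (simp add: Yop_majorant_def norm_mult prod_norm ennreal_mult prod_ennreal)

lemma summable_on_fiber_if_Yop_majorant_finite:
  assumes "Yop_majorant n m psi k0 < top"
  shows "(\<lambda>k. norm (m k * (\<Prod>i\<in>{1..n}. psi i (k i)))) summable_on fiber n k0"
  using assms by (intro ennreal_infsum_real(1)) (auto simp: Yop_majorant_eq_infsum_norm)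

lemma norm_Yop_le_majorant: "ennreal (norm (Yop n m psi k0)) \<le> Yop_majorant n m psi k0"
proof (cases "Yop_majorant n m psi k0 < top")
  case True
  define f where "f k = m k * (\<Prod>i\<in>{1..n}. psi i (k i))" for k
  have "norm (Yop n m psi k0) \<le> (\<Sum>\<^sub>\<infinity>k\<in>fiber n k0. norm (f k))"
    unfolding Yop_def f_def[symmetric]
    using summable_on_fiber_if_Yop_majorant_finite[OF True] by (intro norm_infsum_bound) (simp add: f_def)
  then have "ennreal (norm (Yop n m psi k0)) \<le> ennreal (\<Sum>\<^sub>\<infinity>k\<in>fiber n k0. norm (f k))"
    by (rule ennreal_leI)
  also have "\<dots> = Yop_majorant n m psi k0"
    using True by (subst ennreal_infsum_real(2)) (auto simp: Yop_majorant_eq_infsum_norm f_def)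
  finally show ?thesis .
qed (simp add: less_top[symmetric])

lemma Ynorm_le_if_majorant_bound:
  assumes "p \<noteq> 0"
    and majorant: "\<And>psi k0. Yop_majorant n m psi k0 \<le> F psi k0"
    and bound: "\<And>psi. lpn p UNIV (F psi) \<le> B * (\<Prod>i\<in>{1..n}. FLnorm p (psi i))"
  shows "Ynorm n p m \<le> B"
proof (cases "B < top")
  case True
  have finite_majorant: "Yop_majorant n m psi k0 < top" if "\<forall>i\<in>{1..n}. FLnorm p (psi i) < top" for psi k0
  proof -
    have "Yop_majorant n m psi k0 \<le> lpn p UNIV (F psi)"
      using majorant lpn_upper[OF assms(1)] by (rule order_trans) simp
    also have "\<dots> \<le> B * (\<Prod>i\<in>{1..n}. FLnorm p (psi i))"
      by (rule bound)
    also have "\<dots> < top"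
      using True that by (simp add: ennreal_mult_eq_top_iff ennreal_prod_eq_top less_top[symmetric])
    finally show ?thesis .
  qed
  then have "Y_welldef n p m"
    unfolding Y_welldef_def using finite_majorant summable_on_fiber_if_Yop_majorant_finite by blast
  moreover have "FLnorm p (Yop n m psi) \<le> B" if "\<forall>i\<in>{1..n}. FLnorm p (psi i) \<le> 1" for psi
  proof -
    have "FLnorm p (Yop n m psi) \<le> lpn p UNIV (F psi)"
      unfolding FLnorm_def using assms(1)
      by (rule lpn_mono) (rule order_trans[OF norm_Yop_le_majorant majorant])
    also have "\<dots> \<le> B * (\<Prod>i\<in>{1..n}. FLnorm p (psi i))"
      by (rule bound)
    also have "\<dots> \<le> B * 1"
      using that prod_mono_ennreal[of "{1..n}" "\<lambda>i. FLnorm p (psi i)" "\<lambda>_. 1"]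
      by (intro mult_left_mono) auto
    finally show ?thesis by simp
  qed
  ultimately show ?thesis
    by (auto simp: Ynorm_def intro: SUP_least)
qed (simp add: less_top[symmetric])

lemma Ynorm_le_SUP_lpn_fiber:
  assumes conjugate: "inverse p + inverse q = 1"
  shows "Ynorm n p m \<le> (SUP k0. lpn q (fiber n k0) (\<lambda>k. ennreal (norm (m k))))"
    (is "_ \<le> ?B")
proof -
  define P where "P psi k = (\<Prod>i\<in>{1..n}. ennreal (norm (psi i (k i))))"
    for psi :: "nat \<Rightarrow> int \<Rightarrow> complex" and k
  have "p \<noteq> 0"
    using conjugate by auto
  show ?thesis
  proof (rule Ynorm_le_if_majorant_bound[where F = "\<lambda>psi k0. ?B * lpn p (fiber n k0) (P psi)"])
    fix psi k0
    have "Yop_majorant n m psi k0 \<le> lpn q (fiber n k0) (\<lambda>k. ennreal (norm (m k))) * lpn p (fiber n k0) (P psi)"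
      unfolding Yop_majorant_def P_def[symmetric] using conjugate by (intro holder_lpn2) (simp add: add.commute)
    also have "\<dots> \<le> ?B * lpn p (fiber n k0) (P psi)"
      by (intro mult_right_mono SUP_upper) auto
    finally show "Yop_majorant n m psi k0 \<le> ?B * lpn p (fiber n k0) (P psi)" .
  next
    fix psi
    have "lpn p UNIV (\<lambda>k0. ?B * lpn p (fiber n k0) (P psi)) = ?B * lpn p UNIV (\<lambda>k0. lpn p (fiber n k0) (P psi))"
      using \<open>p \<noteq> 0\<close> by (rule lpn_cmult)
    also have "\<dots> \<le> ?B * (\<Prod>i\<in>{1..n}. FLnorm p (psi i))"
      unfolding P_def FLnorm_def using \<open>p \<noteq> 0\<close> by (intro mult_left_mono lpn_lpn_fiber_prod_le) auto
    finally show "lpn p UNIV (\<lambda>k0. ?B * lpn p (fiber n k0) (P psi)) \<le> \<dots>" .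
  qed fact
qed

lemma Ynorm_le_lpn_lpn_fiber:
  assumes n: "n \<ge> 2" and r: "0 < r"
    and exponents: "inverse qh + of_nat n * inverse (ennreal ((real n - 1) * r)) = 1"
  shows "Ynorm n (ennreal r) m
           \<le> lpn (ennreal r) UNIV (\<lambda>k0. lpn qh (fiber n k0) (\<lambda>k. ennreal (norm (m k))))"
proof -
  let ?X = "\<lambda>k0. lpn qh (fiber n k0) (\<lambda>k. ennreal (norm (m k)))"
  let ?N = "\<lambda>psi. \<Prod>i\<in>{1..n}. FLnorm (ennreal r) (psi i)"
  define G where "G psi i k = (\<Prod>j\<in>{1..n} - {i}. epowr (ennreal (norm (psi j (k j)))) (1 / (real n - 1)))"
    for psi :: "nat \<Rightarrow> int \<Rightarrow> complex" and i k
  have split0: "(\<Prod>i\<in>{0..n}. h i) = h 0 * (\<Prod>i\<in>{1..n}. h i)" for h :: "nat \<Rightarrow> ennreal"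
    by (simp add: prod.atLeast_Suc_atMost)
  show ?thesis
  proof (rule Ynorm_le_if_majorant_bound[where F = "\<lambda>psi k0. ?X k0 * ?N psi"])
    fix psi k0
    define g where "g i = (if i = 0 then (\<lambda>k. ennreal (norm (m k))) else G psi i)" for i
    define e where "e i = (if i = 0 then qh else ennreal ((real n - 1) * r))" for i :: nat
    have "(\<Sum>i\<in>{0..n}. inverse (e i)) = 1"
      using exponents by (simp add: e_def sum.atLeast_Suc_atMost)
    have g_prod: "(\<Prod>i\<in>{1..n}. g i k) = (\<Prod>i\<in>{1..n}. ennreal (norm (psi i (k i))))" for k
    proof -
      have "(\<Prod>i\<in>{1..n}. g i k) = (\<Prod>i\<in>{1..n}. G psi i k)"
        by (intro prod.cong) (auto simp: g_def)
      also have "\<dots> = (\<Prod>i\<in>{1..n}. ennreal (norm (psi i (k i))))"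
        using prod_prod_Diff_singleton_epowr[of "{1..n}" "\<lambda>j. ennreal (norm (psi j (k j)))"] n
        by (simp add: G_def)
      finally show ?thesis .
    qed
    have "Yop_majorant n m psi k0 = (\<Sum>\<^sub>\<infinity>k\<in>fiber n k0. g 0 k * (\<Prod>i\<in>{1..n}. g i k))"
      unfolding Yop_majorant_def g_prod by (simp add: g_def)
    also have "\<dots> = (\<Sum>\<^sub>\<infinity>k\<in>fiber n k0. \<Prod>i\<in>{0..n}. g i k)"
      by (simp only: split0)
    also have "\<dots> \<le> (\<Prod>i\<in>{0..n}. lpn (e i) (fiber n k0) (g i))"
      by (rule holder_lpn) fact
    also have "\<dots> = ?X k0 * (\<Prod>i\<in>{1..n}. lpn (ennreal ((real n - 1) * r)) (fiber n k0) (G psi i))"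
      by (simp add: split0 g_def e_def)
    also have "(\<Prod>i\<in>{1..n}. lpn (ennreal ((real n - 1) * r)) (fiber n k0) (G psi i))
        = (\<Prod>i\<in>{1..n}. \<Prod>j\<in>{1..n} - {i}. epowr (FLnorm (ennreal r) (psi j)) (1 / (real n - 1)))"
      unfolding G_def FLnorm_def using n r by (intro prod.cong refl lpn_fiber_prod_omit) auto
    also have "\<dots> = ?N psi"
      using prod_prod_Diff_singleton_epowr[of "{1..n}"] n by simp
    finally show "Yop_majorant n m psi k0 \<le> ?X k0 * ?N psi" .
  next
    fix psi
    show "lpn (ennreal r) UNIV (\<lambda>k0. ?X k0 * ?N psi) \<le> lpn (ennreal r) UNIV ?X * ?N psi"
      using lpn_cmult[of "ennreal r" UNIV "?N psi" ?X] r by (simp add: mult.commute)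
  qed (use r in simp)
qed

lemma ennreal_inverse_eq_1_iff: "inverse (x :: ennreal) = 1 \<longleftrightarrow> x = 1"
proof (cases x rule: ennreal_cases)
  case (real r)
  then show ?thesis
    by (cases "r = 0") (auto simp: inverse_ennreal ennreal_eq_1)
qed simp

text \<open>At \<open>r = n / (n - 1)\<close> the exponent below is \<open>ennreal r / 0 = top\<close>, i.e. the case \<open>q_hat = \<infinity>\<close>.\<close>

lemma q_hat_reciprocals_sum:
  assumes n: "n \<ge> 2" and r: "real n / (real n - 1) \<le> r"
  shows "inverse (ennreal r / (ennreal r - ennreal (real n / (real n - 1))))
           + of_nat n * inverse (ennreal ((real n - 1) * r)) = 1"
proof -
  define c where "c = real n / (real n - 1)"
  have "c > 0"
    using n by (simp add: c_def)
  then have "r > 0"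
    using r by (simp add: c_def)
  have second: "of_nat n * inverse (ennreal ((real n - 1) * r)) = ennreal (c / r)"
    using n \<open>r > 0\<close>
    by (simp add: inverse_ennreal ennreal_of_nat_eq_real_of_nat ennreal_mult[symmetric] c_def field_simps)
  show ?thesis
  proof (cases "r = c")
    case True
    then show ?thesis
      using second \<open>r > 0\<close> by (simp add: c_def[symmetric] ennreal_divide_zero)
  next
    case False
    then have "c < r" using r by (simp add: c_def)
    then have "inverse (ennreal r / (ennreal r - ennreal c)) = ennreal ((r - c) / r)"
      using \<open>c > 0\<close> by (simp add: ennreal_minus divide_ennreal inverse_ennreal)
    then show ?thesis
      using second \<open>c < r\<close> \<open>c > 0\<close>
      by (simp add: c_def[symmetric] ennreal_plus[symmetric] add_divide_distrib[symmetric] del: ennreal_plus)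
  qed
qed

theorem lemma7:
  fixes n :: nat and m :: "(nat \<Rightarrow> int) \<Rightarrow> complex" and p q :: ennreal
  assumes "n \<ge> 1" and "1 \<le> p" and "inverse p + inverse q = 1"
  shows "Ynorm n p m \<le>
           (SUP k0. lpn q (fiber n k0) (\<lambda>k. ennreal (norm (m k))))
       \<and> (n \<ge> 2 \<longrightarrow> ennreal (real n / (real n - 1)) \<le> p \<longrightarrow>
           Ynorm n p m \<le>
             lpn p UNIV (\<lambda>k0. lpn (if p = top then 1 else p / (p - ennreal (real n / (real n - 1))))
                                 (fiber n k0) (\<lambda>k. ennreal (norm (m k)))))"
proof -
  have sup_bound: "Ynorm n p m \<le> (SUP k0. lpn q (fiber n k0) (\<lambda>k. ennreal (norm (m k))))"
    using assms(3) by (rule Ynorm_le_SUP_lpn_fiber)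
  moreover have "Ynorm n p m \<le>
      lpn p UNIV (\<lambda>k0. lpn (if p = top then 1 else p / (p - ennreal (real n / (real n - 1))))
                          (fiber n k0) (\<lambda>k. ennreal (norm (m k))))"
    if n: "n \<ge> 2" and p: "ennreal (real n / (real n - 1)) \<le> p"
  proof (cases "p = top")
    case True
    then have "q = 1"
      using assms(3) by (simp add: ennreal_inverse_eq_1_iff)
    then show ?thesis
      using sup_bound True by (simp add: lpn_top)
  next
    case False
    then obtain r where r: "p = ennreal r" "real n / (real n - 1) \<le> r"
      using p by (cases p rule: ennreal_cases) (auto simp: ennreal_le_iff)
    have "0 < real n / (real n - 1)"
      using n by simp
    with r(2) have "0 < r"
      by linarith
    with r show ?thesis
      using Ynorm_le_lpn_lpn_fiber[OF n \<open>0 < r\<close> q_hat_reciprocals_sum[OF n r(2)]] by simp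
  qed
  ultimately show ?thesis by blast
qed

end
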